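(* Let $(M,\rho)$ be a complete metric space, let $f:M\to\mathbb{R}\cup\{+\infty\}$ be proper, lower semicontinuous and bounded below, and let $g:M\to\mathbb{R}$ be continuous with $$|\nabla f|(x)>|\nabla g|(x)\qquad\text{for all }x\in\operatorname{dom} f\setminus 0\operatorname{crit} f.$$ Then for every $x_0\in\operatorname{dom} f$ at least one of the following holds: (a) there exists $\bar x\in 0\operatorname{crit} f$ with $f(x_0)-g(x_0)\ge f(\bar x)-g(\bar x)$; (b) for every sequence of positive numbers $\varepsilon_n\searrow0$ there exists a sequence $(x_n)_{n\ge1}$ with $x_n\in\varepsilon_n\operatorname{crit} f$ for all $n$, which has no convergent subsequence, and which (together with the given $x_0$) satisfies $$\sum_{n=1}^\infty\varepsilon_n\rho(x_n,x_{n-1})<\infty\quad\text{and}\quad f(x_n)-g(x_n)\ge f(x_{n+1})-g(x_{n+1})\ \text{ for all } n\ge0.$$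
   Context: $\operatorname{dom} f:=\{x:f(x)<+\infty\}$. $[t]^+:=\max\{0,t\}$ (with $[f(x)-f(y)]^+:=0$ if $f(y)=+\infty$). For $x\in\operatorname{dom} f$, the local slope is $|\nabla f|(x):=\limsup_{y\to x,\,y\neq x}\frac{[f(x)-f(y)]^+}{\rho(x,y)}\in[0,+\infty]$ (equal to $0$ at isolated points). For $\varepsilon\ge0$, $\varepsilon\operatorname{crit} f:=\{x\in\operatorname{dom} f:\ |\nabla f|(x)\le\varepsilon\}$. *)

theory Defs
  imports "HOL-Analysis.Analysis"
begin

text \<open>Extended-real-valued functions f :: 'a \<Rightarrow> ereal on a metric space model
  functions into the reals extended by +infinity.\<close>

definition efdom :: "('a \<Rightarrow> ereal) \<Rightarrow> 'a set" where
  "efdom f = {x. f x < \<infinity>}"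

text \<open>Note f x - \<infinity> = -\<infinity> in ereal, so the positive part is 0 when f y = \<infinity>.
  The outer max with 0 makes the slope 0 at isolated points (where the
  Limsup over the trivial filter is -\<infinity>); elsewhere it has no effect.\<close>
definition slope :: "('a::metric_space \<Rightarrow> ereal) \<Rightarrow> 'a \<Rightarrow> ereal" where
  "slope f x = max 0 (Limsup (at x) (\<lambda>y. max 0 (f x - f y) / ereal (dist x y)))"

definition ecrit :: "real \<Rightarrow> ('a::metric_space \<Rightarrow> ereal) \<Rightarrow> 'a set" where
  "ecrit \<epsilon> f = {x \<in> efdom f. slope f x \<le> ereal \<epsilon>}"

definition lsc :: "('a::topological_space \<Rightarrow> ereal) \<Rightarrow> bool" where
  "lsc f \<longleftrightarrow> (\<forall>x. f x \<le> Liminf (at x) f)"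

definition proper_fun :: "('a \<Rightarrow> ereal) \<Rightarrow> bool" where
  "proper_fun f \<longleftrightarrow> efdom f \<noteq> {} \<and> (\<forall>x. f x \<noteq> -\<infinity>)"

end

theory Submission
  imports Defs
begin

(* Starting from x0, apply Ekeland's variational principle with weight \<epsilon>_n to f on the
   sublevel set {f - g \<le> f(x_(n-1)) - g(x_(n-1))}. The Ekeland point x_n is \<epsilon>_n-critical:
   where the slope of f exceeds both \<epsilon>_n and the slope of g, one can step to a nearby point
   that lowers f by more than \<epsilon>_n times the distance and also lowers f - g.
   The weighted steps telescope against f, which is bounded below, so they are summable.
   If (a) fails, a cluster point z of (x_n) lies in all sublevel sets, hence strictly below
   every value of f - g at 0-critical points, so z is not critical. A descent point w from z
   has f(w) < f(z) and lies in all sublevel sets, so the Ekeland inequalities at x_n together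
   with \<epsilon>_n \<rightarrow> 0 and lower semicontinuity give f(z) \<le> f(w), a contradiction. *)

lemma closed_sublevel_lsc:
  fixes f :: "'a::topological_space \<Rightarrow> ereal" and u :: "'a \<Rightarrow> real"
  assumes "lsc f" and "continuous_on UNIV u"
  shows "closed {x. f x \<le> ereal (u x)}"
proof -
  have "eventually (\<lambda>y. ereal (u y) < f y) (nhds x)" if ux: "ereal (u x) < f x" for x
  proof -
    obtain c where c: "u x < c" "ereal c < f x"
      using ereal_dense2[OF ux] by auto
    have "ereal c < Liminf (at x) f"
      using c(2) \<open>lsc f\<close> unfolding lsc_def by (blast intro: less_le_trans)
    then have "eventually (\<lambda>y. ereal c < f y) (at x)"
      by (rule less_LiminfD)
    moreover have "eventually (\<lambda>y. u y < c) (at x)"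
      using assms(2) c(1) by (intro order_tendstoD(2)) (simp_all add: continuous_on_def)
    ultimately have "eventually (\<lambda>y. ereal (u y) < f y) (at x)"
      by eventually_elim (meson ereal_less_eq(3) less_imp_le order_le_less_trans)
    then show ?thesis
      using ux by (simp add: eventually_nhds_conv_at)
  qed
  then have "open {x. ereal (u x) < f x}"
    unfolding open_subopen[of "{x. ereal (u x) < f x}"] eventually_nhds by fastforce
  then show ?thesis
    by (simp add: closed_def Collect_neg_eq[symmetric] not_le)
qed

lemma efdom_ereal_real:
  assumes "f x \<noteq> -\<infinity>" and "x \<in> efdom f"
  shows "f x = ereal (real_of_ereal (f x))"
  using assms by (cases "f x") (auto simp: efdom_def)

lemma le_ereal_iff_efdom:
  assumes "f x \<noteq> -\<infinity>"
  shows "f x \<le> ereal a \<longleftrightarrow> x \<in> efdom f \<and> real_of_ereal (f x) \<le> a"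
  using assms by (cases "f x") (auto simp: efdom_def)

lemma closed_efdom_sublevel:
  fixes f :: "'a::topological_space \<Rightarrow> ereal" and u :: "'a \<Rightarrow> real"
  assumes "\<And>x. f x \<noteq> -\<infinity>" and "lsc f" and "continuous_on UNIV u"
  shows "closed {x \<in> efdom f. real_of_ereal (f x) \<le> u x}"
proof -
  have "{x \<in> efdom f. real_of_ereal (f x) \<le> u x} = {x. f x \<le> ereal (u x)}"
    using le_ereal_iff_efdom[of f, OF assms(1)] by blast
  then show ?thesis
    using closed_sublevel_lsc[OF assms(2,3)] by simp
qed

lemma summable_le_decrements:
  fixes a b :: "nat \<Rightarrow> real"
  assumes "\<And>n. 0 \<le> a n" and "\<And>n. a n \<le> b n - b (Suc n)" and "\<And>n. c \<le> b n"
  shows "summable a"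
proof (rule summableI_nonneg_bounded)
  fix n
  have "(\<Sum>i<n. a i) \<le> (\<Sum>i<n. b i - b (Suc i))"
    by (intro sum_mono assms(2))
  also have "\<dots> = b 0 - b n"
    by (rule sum_lessThan_telescope')
  also have "\<dots> \<le> b 0 - c"
    using assms(3) by simp
  finally show "(\<Sum>i<n. a i) \<le> b 0 - c" .
qed (rule assms(1))

subsection \<open>Ekeland's variational principle\<close>

definition ekeland_set :: "('a::metric_space \<Rightarrow> real) \<Rightarrow> real \<Rightarrow> 'a set \<Rightarrow> 'a \<Rightarrow> 'a set" where
  "ekeland_set F \<epsilon> S v = {w \<in> S. F w + \<epsilon> * dist w v \<le> F v}"

lemma ekeland_set_refl: "v \<in> S \<Longrightarrow> v \<in> ekeland_set F \<epsilon> S v"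
  by (simp add: ekeland_set_def)

lemma ekeland_set_trans:
  assumes "\<epsilon> \<ge> 0" and "w \<in> ekeland_set F \<epsilon> S u" and "u \<in> ekeland_set F \<epsilon> S v"
  shows "w \<in> ekeland_set F \<epsilon> S v"
proof -
  have "\<epsilon> * dist w v \<le> \<epsilon> * dist w u + \<epsilon> * dist u v"
    using assms(1) dist_triangle[of w v u] by (simp add: distrib_left[symmetric] mult_left_mono)
  then show ?thesis
    using assms(2,3) by (auto simp: ekeland_set_def)
qed

lemma ekeland_set_dist_le:
  assumes "\<epsilon> \<ge> 0" and "bdd_below (F ` S)"
    and "u \<in> ekeland_set F \<epsilon> S v" and "F u \<le> Inf (F ` ekeland_set F \<epsilon> S v) + \<delta>"
    and "a \<in> ekeland_set F \<epsilon> S u" and "b \<in> ekeland_set F \<epsilon> S u"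
  shows "\<epsilon> * dist a b \<le> 2 * \<delta>"
proof -
  have close: "\<epsilon> * dist w u \<le> \<delta>" if "w \<in> ekeland_set F \<epsilon> S u" for w
  proof -
    have "bdd_below (F ` ekeland_set F \<epsilon> S v)"
      using assms(2) by (rule bdd_below_mono) (auto simp: ekeland_set_def)
    then have "Inf (F ` ekeland_set F \<epsilon> S v) \<le> F w"
      using ekeland_set_trans[OF assms(1) that assms(3)] by (simp add: cInf_lower)
    then show ?thesis
      using assms(4) that by (simp add: ekeland_set_def)
  qed
  moreover have "\<epsilon> * dist a b \<le> \<epsilon> * dist a u + \<epsilon> * dist b u"
    using assms(1) dist_triangle2[of a b u] by (simp add: distrib_left[symmetric] mult_left_mono)
  ultimately show ?thesis
    using close[OF assms(5)] close[OF assms(6)] by linarith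
qed

lemma ekeland_set_nest:
  fixes F :: "'a::metric_space \<Rightarrow> real"
  assumes "y \<in> S" and "\<epsilon> > 0" and "bdd_below (F ` S)"
  obtains v :: "nat \<Rightarrow> 'a" where "v 0 = y" and "\<And>n. v n \<in> S"
    and "\<And>m n. m \<le> n \<Longrightarrow> ekeland_set F \<epsilon> S (v n) \<subseteq> ekeland_set F \<epsilon> S (v m)"
    and "\<And>e. e > 0 \<Longrightarrow> \<exists>n. \<forall>a \<in> ekeland_set F \<epsilon> S (v n).
      \<forall>b \<in> ekeland_set F \<epsilon> S (v n). dist a b < e"
proof -
  let ?T = "ekeland_set F \<epsilon> S"
  have "\<exists>u. u \<in> ?T v \<and> F u \<le> Inf (F ` ?T v) + 1 / Suc n" if "v \<in> S" for v n
    using cInf_lessD[of "F ` ?T v" "Inf (F ` ?T v) + 1 / Suc n"] ekeland_set_refl[OF that]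
    by force
  then have "\<exists>v. \<forall>n. (v n \<in> S \<and> (n = 0 \<longrightarrow> v n = y))
      \<and> v (Suc n) \<in> ?T (v n) \<and> F (v (Suc n)) \<le> Inf (F ` ?T (v n)) + 1 / Suc n"
    by (intro dependent_nat_choice) (use \<open>y \<in> S\<close> in \<open>auto simp: ekeland_set_def\<close>)
  then obtain v where v0: "v 0 = y" and vS: "\<And>n. v n \<in> S"
    and v_step: "\<And>n. v (Suc n) \<in> ?T (v n)"
    and v_min: "\<And>n. F (v (Suc n)) \<le> Inf (F ` ?T (v n)) + 1 / Suc n"
    by blast
  have "?T (v n) \<subseteq> ?T (v m)" if "m \<le> n" for m n
    using that
  proof (induction n rule: dec_induct)
    case (step n)
    then show ?case
      using ekeland_set_trans[OF less_imp_le[OF \<open>\<epsilon> > 0\<close>] _ v_step] by blast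
  qed simp
  moreover have "\<exists>n. \<forall>a\<in>?T (v n). \<forall>b\<in>?T (v n). dist a b < e" if "e > 0" for e
  proof -
    obtain k :: nat where k: "2 / (\<epsilon> * e) < Suc k"
      using reals_Archimedean2[of "2 / (\<epsilon> * e)"] by (meson lessI of_nat_less_iff order_less_trans)
    have "dist a b < e" if "a \<in> ?T (v (Suc k))" "b \<in> ?T (v (Suc k))" for a b
    proof -
      have "\<epsilon> * dist a b \<le> 2 * (1 / Suc k)"
        using ekeland_set_dist_le[OF _ assms(3) v_step v_min that] \<open>\<epsilon> > 0\<close> by simp
      also have "\<dots> < \<epsilon> * e"
        using k \<open>\<epsilon> > 0\<close> \<open>e > 0\<close> by (simp add: field_simps)
      finally show ?thesis
        using \<open>\<epsilon> > 0\<close> by simp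
    qed
    then show ?thesis by blast
  qed
  ultimately show thesis
    using that v0 vS by blast
qed

theorem ekeland_variational_principle:
  fixes F :: "'a::complete_space \<Rightarrow> real"
  assumes "y \<in> S" and "\<epsilon> > 0" and "bdd_below (F ` S)"
    and "\<And>v t. closed {w \<in> S. F w + \<epsilon> * dist w v \<le> t}"
  obtains z where "z \<in> S" and "F z + \<epsilon> * dist z y \<le> F y"
    and "\<And>w. w \<in> S \<Longrightarrow> F z \<le> F w + \<epsilon> * dist w z"
proof -
  let ?T = "ekeland_set F \<epsilon> S"
  obtain v :: "nat \<Rightarrow> 'a" where v0: "v 0 = y" and vS: "\<And>n. v n \<in> S"
    and T_decr: "\<And>m n. m \<le> n \<Longrightarrow> ?T (v n) \<subseteq> ?T (v m)"
    and T_small: "\<And>e. e > 0 \<Longrightarrow> \<exists>n. \<forall>a \<in> ?T (v n). \<forall>b \<in> ?T (v n). dist a b < e"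
    using ekeland_set_nest[OF assms(1-3)] by blast
  obtain z where z: "(\<Inter>n. ?T (v n)) = {z}"
    using decreasing_closed_nest_sing[of "\<lambda>n. ?T (v n)"] assms(4) ekeland_set_refl[OF vS]
      T_decr T_small
    unfolding ekeland_set_def by blast
  then have zT: "z \<in> ?T (v n)" for n
    by blast
  show thesis
  proof
    show "z \<in> S" "F z + \<epsilon> * dist z y \<le> F y"
      using zT[of 0] v0 by (simp_all add: ekeland_set_def)
  next
    fix w assume "w \<in> S"
    show "F z \<le> F w + \<epsilon> * dist w z"
    proof (rule ccontr)
      assume gt: "\<not> F z \<le> F w + \<epsilon> * dist w z"
      then have "w \<in> ?T z"
        using \<open>w \<in> S\<close> by (simp add: ekeland_set_def)
      then have "w \<in> (\<Inter>n. ?T (v n))"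
        using ekeland_set_trans[OF less_imp_le[OF \<open>\<epsilon> > 0\<close>] _ zT] by blast
      then show False
        using z gt by simp
    qed
  qed
qed

subsection \<open>Descent along the local slope\<close>

lemma slope_nonneg: "0 \<le> slope f x"
  by (simp add: slope_def)

lemma slope_quotient_witness:
  fixes f g :: "'a::metric_space \<Rightarrow> ereal"
  assumes "slope g x < ereal c" and "ereal c < slope f x"
  obtains w where "w \<noteq> x"
    and "ereal c < max 0 (f x - f w) / ereal (dist x w)"
    and "max 0 (g x - g w) / ereal (dist x w) < ereal c"
proof -
  define q where "q h w = max 0 (h x - h w) / ereal (dist x w)" for h :: "'a \<Rightarrow> ereal" and w
  have g_small: "eventually (\<lambda>w. q g w < ereal c) (at x)"
    using assms(1) unfolding slope_def q_def by (intro Limsup_lessD) simp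
  have "\<exists>w. w \<noteq> x \<and> ereal c < q f w \<and> q g w < ereal c"
  proof (rule ccontr)
    assume no_witness: "\<not> ?thesis"
    have "eventually (\<lambda>w. q f w \<le> ereal c) (at x)"
      using g_small unfolding eventually_at_filter
      by (rule eventually_mono) (use no_witness in \<open>auto simp: not_less\<close>)
    then have "Limsup (at x) (q f) \<le> ereal c"
      by (rule Limsup_bounded)
    moreover have "0 \<le> ereal c"
      using slope_nonneg assms(1) by (rule order_le_less_trans[THEN less_imp_le])
    ultimately have "slope f x \<le> ereal c"
      by (simp add: slope_def q_def[abs_def])
    then show False
      using assms(2) by simp
  qed
  then show thesis
    using that unfolding q_def by blast
qed

lemma slope_descent_point:
  fixes f :: "'a::metric_space \<Rightarrow> ereal" and g :: "'a \<Rightarrow> real"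
  assumes "\<And>w. f w \<noteq> -\<infinity>" and "x \<in> efdom f"
    and "slope (\<lambda>y. ereal (g y)) x < slope f x" and "ereal e < slope f x"
  obtains w where "w \<in> efdom f"
    and "real_of_ereal (f w) + e * dist w x < real_of_ereal (f x)"
    and "real_of_ereal (f w) - g w < real_of_ereal (f x) - g x"
proof -
  obtain c where c: "max (ereal e) (slope (\<lambda>y. ereal (g y)) x) < ereal c" "ereal c < slope f x"
    using ereal_dense2 assms(3,4) by (metis max_less_iff_conj)
  have "0 < ereal c"
    using slope_nonneg c(1) by (rule order_le_less_trans[OF _ le_less_trans[OF max.cobounded2]])
  then have "0 < c"
    by simp
  obtain w where "w \<noteq> x" and f_drop: "ereal c < max 0 (f x - f w) / ereal (dist x w)"
    and g_drop: "max 0 (ereal (g x) - ereal (g w)) / ereal (dist x w) < ereal c"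
    using slope_quotient_witness[of "\<lambda>y. ereal (g y)" x c f] c by auto
  define d where "d = dist w x"
  have "d > 0"
    using \<open>w \<noteq> x\<close> by (simp add: d_def)
  have fx: "f x = ereal (real_of_ereal (f x))"
    using assms(1,2) by (rule efdom_ereal_real)
  have "f w \<noteq> \<infinity>"
  proof
    assume "f w = \<infinity>"
    then have "max 0 (f x - f w) = 0"
      by (subst fx) simp
    then show False
      using f_drop \<open>0 < c\<close> by simp
  qed
  then have w_dom: "w \<in> efdom f"
    by (simp add: efdom_def top.not_eq_extremum)
  with assms(1) have fw: "f w = ereal (real_of_ereal (f w))"
    by (rule efdom_ereal_real)
  have "c * d < max 0 (real_of_ereal (f x) - real_of_ereal (f w))"
    using f_drop \<open>d > 0\<close> by (subst (asm) fx, subst (asm) fw)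
      (simp add: ereal_max_0 d_def dist_commute field_simps del: ereal_max)
  moreover have "max 0 (g x - g w) < c * d"
    using g_drop \<open>d > 0\<close>
    by (simp add: ereal_max_0 d_def dist_commute field_simps del: ereal_max)
  moreover have "e * d < c * d" and "0 < c * d"
    using c(1) \<open>d > 0\<close> \<open>0 < c\<close> by simp_all
  ultimately show thesis
    using that[OF w_dom] unfolding d_def by linarith
qed

subsection \<open>Descent sequences\<close>

locale slope_dominated =
  fixes f :: "'a::complete_space \<Rightarrow> ereal" and g :: "'a \<Rightarrow> real" and c :: real
  assumes not_minf: "\<And>x. f x \<noteq> -\<infinity>" and lsc: "lsc f" and lower_bound: "\<And>x. ereal c \<le> f x"
    and continuous_g: "continuous_on UNIV g"
    and slope_gt: "\<And>x. x \<in> efdom f - ecrit 0 f \<Longrightarrow> slope (\<lambda>y. ereal (g y)) x < slope f x"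
begin

definition F :: "'a \<Rightarrow> real" where
  "F x = real_of_ereal (f x)" \<comment> \<open>junk value 0 outside efdom f\<close>

definition H :: "'a \<Rightarrow> real" where
  "H x = F x - g x"

lemma f_eq_F: "x \<in> efdom f \<Longrightarrow> f x = ereal (F x)"
  unfolding F_def using not_minf by (rule efdom_ereal_real)

lemma F_lower: "x \<in> efdom f \<Longrightarrow> c \<le> F x"
  using lower_bound[of x] by (simp add: f_eq_F)

lemma f_minus_g_eq_H: "x \<in> efdom f \<Longrightarrow> f x - ereal (g x) = ereal (H x)"
  by (simp add: f_eq_F H_def)

lemma sublevel_limit:
  assumes "continuous_on UNIV u" and "y \<longlonglongrightarrow> z"
    and "eventually (\<lambda>k. y k \<in> efdom f \<and> F (y k) \<le> u (y k)) sequentially"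
  shows "z \<in> efdom f" and "F z \<le> u z"
proof -
  have "z \<in> {x \<in> efdom f. F x \<le> u x}"
    using closed_efdom_sublevel[OF not_minf lsc assms(1)] assms(3) assms(2)
    unfolding F_def by (intro Lim_in_closed_set) auto
  then show "z \<in> efdom f" and "F z \<le> u z"
    by auto
qed

lemma ecrit_if_ekeland_point:
  assumes "z \<in> efdom f" and "e \<ge> 0"
    and "\<And>w. w \<in> efdom f \<Longrightarrow> H w < H z \<Longrightarrow> F z \<le> F w + e * dist w z"
  shows "z \<in> ecrit e f"
proof (rule ccontr)
  assume "z \<notin> ecrit e f"
  then have steep: "ereal e < slope f z"
    using assms(1) by (simp add: ecrit_def)
  then have "z \<notin> ecrit 0 f"
    using order_trans[of "slope f z" "ereal 0" "ereal e"] assms(2) by (auto simp: ecrit_def)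
  then obtain w where "w \<in> efdom f" "F w + e * dist w z < F z" "H w < H z"
    using slope_descent_point[OF not_minf assms(1) slope_gt steep] assms(1)
    unfolding F_def H_def by blast
  then show False
    using assms(3) by fastforce
qed

lemma ekeland_critical_step:
  assumes "y \<in> efdom f" and "e > 0"
  obtains z where "z \<in> ecrit e f" and "H z \<le> H y" and "e * dist z y \<le> F y - F z"
    and "\<And>w. w \<in> efdom f \<Longrightarrow> H w \<le> H y \<Longrightarrow> F z \<le> F w + e * dist w z"
proof -
  let ?S = "{w \<in> efdom f. H w \<le> H y}"
  have "closed {w \<in> ?S. F w + e * dist w v \<le> t}" for v t
  proof -
    have eq: "{w \<in> ?S. F w + e * dist w v \<le> t}
        = {w \<in> efdom f. real_of_ereal (f w) \<le> min (g w + H y) (t - e * dist w v)}"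
      by (auto simp: H_def F_def)
    have "continuous_on UNIV (\<lambda>w. min (g w + H y) (t - e * dist w v))"
      by (intro continuous_intros continuous_g)
    from closed_efdom_sublevel[OF not_minf lsc this] show ?thesis
      unfolding eq .
  qed
  moreover have "bdd_below (F ` ?S)"
    using F_lower by (intro bdd_belowI[of _ c]) auto
  ultimately obtain z where z: "z \<in> ?S" "F z + e * dist z y \<le> F y"
    and z_min: "\<And>w. w \<in> ?S \<Longrightarrow> F z \<le> F w + e * dist w z"
    using ekeland_variational_principle[of y ?S e F] assms by auto
  have "z \<in> ecrit e f"
    using z(1) \<open>e > 0\<close> z_min by (intro ecrit_if_ekeland_point) auto
  then show thesis
    using that z z_min by auto
qed

lemma descent_sequence_exists:
  fixes \<epsilon> :: "nat \<Rightarrow> real"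
  assumes "x0 \<in> efdom f" and "\<And>n. \<epsilon> (Suc n) > 0"
  obtains x :: "nat \<Rightarrow> 'a" where "x 0 = x0" and "\<And>n. x (Suc n) \<in> ecrit (\<epsilon> (Suc n)) f"
    and "\<And>n. H (x (Suc n)) \<le> H (x n)"
    and "\<And>n. \<epsilon> (Suc n) * dist (x (Suc n)) (x n) \<le> F (x n) - F (x (Suc n))"
    and "\<And>n w. w \<in> efdom f \<Longrightarrow> H w \<le> H (x n)
      \<Longrightarrow> F (x (Suc n)) \<le> F w + \<epsilon> (Suc n) * dist w (x (Suc n))"
proof -
  have "\<exists>x. \<forall>n. (x n \<in> efdom f \<and> (n = 0 \<longrightarrow> x n = x0))
      \<and> x (Suc n) \<in> ecrit (\<epsilon> (Suc n)) f \<and> H (x (Suc n)) \<le> H (x n)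
      \<and> \<epsilon> (Suc n) * dist (x (Suc n)) (x n) \<le> F (x n) - F (x (Suc n))
      \<and> (\<forall>w \<in> efdom f. H w \<le> H (x n)
            \<longrightarrow> F (x (Suc n)) \<le> F w + \<epsilon> (Suc n) * dist w (x (Suc n)))"
  proof (rule dependent_nat_choice)
    fix y and n :: nat
    assume "y \<in> efdom f \<and> (n = 0 \<longrightarrow> y = x0)"
    then obtain z where "z \<in> ecrit (\<epsilon> (Suc n)) f" "H z \<le> H y"
      "\<epsilon> (Suc n) * dist z y \<le> F y - F z"
      "\<And>w. w \<in> efdom f \<Longrightarrow> H w \<le> H y \<Longrightarrow> F z \<le> F w + \<epsilon> (Suc n) * dist w z"
      using ekeland_critical_step assms(2) by blast
    then show "\<exists>z. (z \<in> efdom f \<and> (Suc n = 0 \<longrightarrow> z = x0))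
        \<and> z \<in> ecrit (\<epsilon> (Suc n)) f \<and> H z \<le> H y \<and> \<epsilon> (Suc n) * dist z y \<le> F y - F z
        \<and> (\<forall>w \<in> efdom f. H w \<le> H y \<longrightarrow> F z \<le> F w + \<epsilon> (Suc n) * dist w z)"
      by (auto simp: ecrit_def)
  qed (use assms(1) in blast)
  then show thesis
    using that by blast
qed

lemma descent_sequence_no_convergent_subseq:
  fixes \<epsilon> :: "nat \<Rightarrow> real"
  assumes x_dom: "\<And>n. x n \<in> efdom f"
    and H_decr: "\<And>n. H (x (Suc n)) \<le> H (x n)"
    and ekeland: "\<And>n w. w \<in> efdom f \<Longrightarrow> H w \<le> H (x n)
      \<Longrightarrow> F (x (Suc n)) \<le> F w + \<epsilon> (Suc n) * dist w (x (Suc n))"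
    and "(\<lambda>n. \<epsilon> (Suc n)) \<longlonglongrightarrow> 0"
    and below_crit: "\<And>z. z \<in> ecrit 0 f \<Longrightarrow> H (x 0) < H z"
  shows "\<not> (\<exists>r. strict_mono r \<and> convergent ((\<lambda>n. x (Suc n)) \<circ> r))"
proof
  assume "\<exists>r. strict_mono r \<and> convergent ((\<lambda>n. x (Suc n)) \<circ> r)"
  then obtain r z where r: "strict_mono r" and lim: "(\<lambda>k. x (Suc (r k))) \<longlonglongrightarrow> z"
    unfolding convergent_def o_def by blast
  have z_below: "z \<in> efdom f \<and> H z \<le> H (x n)" for n
  proof -
    have ev: "eventually (\<lambda>k. x (Suc (r k)) \<in> efdom f
        \<and> F (x (Suc (r k))) \<le> g (x (Suc (r k))) + H (x n)) sequentially"
    proof (rule eventually_sequentiallyI)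
      fix k assume "n \<le> k"
      then have "n \<le> Suc (r k)"
        using seq_suble[OF r, of k] by simp
      with decseq_SucI[of "\<lambda>n. H (x n)", OF H_decr] have "H (x (Suc (r k))) \<le> H (x n)"
        by (rule decseqD)
      then show "x (Suc (r k)) \<in> efdom f \<and> F (x (Suc (r k))) \<le> g (x (Suc (r k))) + H (x n)"
        using x_dom by (simp add: H_def)
    qed
    have "continuous_on UNIV (\<lambda>w. g w + H (x n))"
      by (intro continuous_intros continuous_g)
    from sublevel_limit[OF this lim ev] show ?thesis
      by (simp add: H_def)
  qed
  have z_noncrit: "z \<in> efdom f - ecrit 0 f"
    using below_crit[of z] z_below[of 0] by force
  then have "ereal 0 < slope f z"
    by (auto simp: ecrit_def not_le)
  with z_noncrit obtain w where "w \<in> efdom f" "F w < F z" "H w < H z"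
    using slope_descent_point[OF not_minf _ slope_gt, of z 0] by (auto simp: F_def H_def)
  have "(\<lambda>k. F w + \<epsilon> (Suc (r k)) * dist w (x (Suc (r k)))) \<longlonglongrightarrow> F w + 0 * dist w z"
    using LIMSEQ_subseq_LIMSEQ[OF assms(4) r] lim by (intro tendsto_intros) (simp_all add: o_def)
  then have "eventually (\<lambda>k. F w + \<epsilon> (Suc (r k)) * dist w (x (Suc (r k))) < (F w + F z) / 2)
      sequentially"
    using \<open>F w < F z\<close> by (intro order_tendstoD(2)) auto
  then have "eventually (\<lambda>k. x (Suc (r k)) \<in> efdom f \<and> F (x (Suc (r k))) \<le> (F w + F z) / 2)
      sequentially"
  proof (rule eventually_mono)
    fix k
    assume "F w + \<epsilon> (Suc (r k)) * dist w (x (Suc (r k))) < (F w + F z) / 2"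
    moreover have "H w \<le> H (x (r k))"
      using \<open>H w < H z\<close> z_below[of "r k"] by simp
    ultimately show "x (Suc (r k)) \<in> efdom f \<and> F (x (Suc (r k))) \<le> (F w + F z) / 2"
      using ekeland[OF \<open>w \<in> efdom f\<close>] x_dom by fastforce
  qed
  from sublevel_limit(2)[OF _ lim this] have "F z \<le> (F w + F z) / 2"
    by simp
  then show False
    using \<open>F w < F z\<close> by simp
qed

lemma descent_sequence:
  fixes \<epsilon> :: "nat \<Rightarrow> real"
  assumes "x0 \<in> efdom f" and "\<And>z. z \<in> ecrit 0 f \<Longrightarrow> H x0 < H z"
    and "\<And>n. \<epsilon> (Suc n) > 0" and "(\<lambda>n. \<epsilon> (Suc n)) \<longlonglongrightarrow> 0"
  shows "\<exists>x. x 0 = x0 \<and> (\<forall>n\<ge>1. x n \<in> ecrit (\<epsilon> n) f)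
    \<and> \<not> (\<exists>r. strict_mono r \<and> convergent ((\<lambda>n. x (Suc n)) \<circ> r))
    \<and> summable (\<lambda>n. \<epsilon> (Suc n) * dist (x (Suc n)) (x n))
    \<and> (\<forall>n. f (x n) - ereal (g (x n)) \<ge> f (x (Suc n)) - ereal (g (x (Suc n))))"
proof -
  obtain x where x0: "x 0 = x0" and crit: "\<And>n. x (Suc n) \<in> ecrit (\<epsilon> (Suc n)) f"
    and H_decr: "\<And>n. H (x (Suc n)) \<le> H (x n)"
    and dist_le: "\<And>n. \<epsilon> (Suc n) * dist (x (Suc n)) (x n) \<le> F (x n) - F (x (Suc n))"
    and ekeland: "\<And>n w. w \<in> efdom f \<Longrightarrow> H w \<le> H (x n)
      \<Longrightarrow> F (x (Suc n)) \<le> F w + \<epsilon> (Suc n) * dist w (x (Suc n))"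
    using descent_sequence_exists[where \<epsilon> = \<epsilon>, OF assms(1,3)] by blast
  have x_dom: "x n \<in> efdom f" for n
    using crit assms(1) x0 by (cases n) (auto simp: ecrit_def)
  have "\<forall>n\<ge>1. x n \<in> ecrit (\<epsilon> n) f"
    using crit by (auto simp: Suc_le_eq dest: gr0_implies_Suc)
  moreover have "\<not> (\<exists>r. strict_mono r \<and> convergent ((\<lambda>n. x (Suc n)) \<circ> r))"
    using x_dom H_decr ekeland assms(4) assms(2)[folded x0]
    by (rule descent_sequence_no_convergent_subseq)
  moreover have "summable (\<lambda>n. \<epsilon> (Suc n) * dist (x (Suc n)) (x n))"
    using dist_le F_lower[OF x_dom] less_imp_le[OF assms(3)]
    by (intro summable_le_decrements[where b = "\<lambda>n. F (x n)"]) simp_all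
  moreover have "\<forall>n. f (x n) - ereal (g (x n)) \<ge> f (x (Suc n)) - ereal (g (x (Suc n)))"
    using H_decr by (simp add: f_minus_g_eq_H x_dom)
  ultimately show ?thesis
    using x0 by blast
qed

end

theorem theorem3p5:
  fixes f :: "'a::complete_space \<Rightarrow> ereal" and g :: "'a \<Rightarrow> real"
  assumes "proper_fun f" and "lsc f" and "\<exists>c::real. \<forall>x. ereal c \<le> f x"
    and "continuous_on UNIV g"
    and "\<forall>x \<in> efdom f - ecrit 0 f. slope f x > slope (\<lambda>y. ereal (g y)) x"
  shows "\<forall>x0 \<in> efdom f.
     (\<exists>xb \<in> ecrit 0 f. f x0 - ereal (g x0) \<ge> f xb - ereal (g xb))
   \<or> (\<forall>\<epsilon> :: nat \<Rightarrow> real.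
        (\<forall>n\<ge>1. \<epsilon> n > 0) \<and> (\<forall>n\<ge>1. \<epsilon> (Suc n) \<le> \<epsilon> n) \<and> (\<lambda>n. \<epsilon> (Suc n)) \<longlonglongrightarrow> 0 \<longrightarrow>
        (\<exists>x :: nat \<Rightarrow> 'a. x 0 = x0
           \<and> (\<forall>n\<ge>1. x n \<in> ecrit (\<epsilon> n) f)
           \<and> \<not> (\<exists>r. strict_mono r \<and> convergent ((\<lambda>n. x (Suc n)) \<circ> r))
           \<and> summable (\<lambda>n. \<epsilon> (Suc n) * dist (x (Suc n)) (x n))
           \<and> (\<forall>n. f (x n) - ereal (g (x n)) \<ge> f (x (Suc n)) - ereal (g (x (Suc n))))))"
proof -
  obtain c where "\<forall>x. ereal c \<le> f x"
    using assms(3) by blast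
  then interpret slope_dominated f g c
    using assms(1,2,4,5) by unfold_locales (auto simp: proper_fun_def)
  have "H x0 < H z" if "x0 \<in> efdom f" and "z \<in> ecrit 0 f"
    and "\<not> f x0 - ereal (g x0) \<ge> f z - ereal (g z)" for x0 z
    using that by (simp add: f_minus_g_eq_H ecrit_def)
  then show ?thesis
    using descent_sequence by auto
qed

end
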